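(* Let $(\pi_k)_k$ be a sequence of paths in a finite directed multigraph $\Gamma$. If there is an edge $\zeta$ of $\Gamma$ such that the sequence $(|\pi_k|_\zeta)_k$ is unbounded, then there is a cycle $\gamma$ in $\Gamma$ such that the sequence $(|\pi_k|_{c(\gamma)})_k$ is unbounded.
   Context: For a path $\gamma$ in $\Gamma$, its support $c(\gamma)$ is the subgraph of $\Gamma$ induced by the edges traversed by $\gamma$. For a path $\pi$ and an edge $\zeta$, $|\pi|_\zeta$ is the number of times $\pi$ traverses $\zeta$; for a subgraph $\Gamma'$, $|\pi|_{\Gamma'}$ is the minimum of $|\pi|_\zeta$ over all edges $\zeta$ of $\Gamma'$. *)

theory Defs
  imports Main "Graph_Theory.Digraph" "Graph_Theory.Arc_Walk"
begin

definition is_path :: "('a,'b) pre_digraph \<Rightarrow> 'b list \<Rightarrow> bool" where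
  "is_path G p \<longleftrightarrow> (\<exists>u v. pre_digraph.awalk G u p v)"

definition edge_count :: "'b list \<Rightarrow> 'b \<Rightarrow> nat" where
  "edge_count p e = count_list p e"

text \<open>Support c(gamma): the edges traversed by gamma (the subgraph induced by them).\<close>
definition support_arcs :: "'b list \<Rightarrow> 'b set" where
  "support_arcs g = set g"

definition subgraph_count :: "'b list \<Rightarrow> 'b set \<Rightarrow> nat" where
  "subgraph_count p E = Min ((\<lambda>e. edge_count p e) ` E)"

end

theory Submission
  imports Defs
begin

text \<open>Cutting a walk at the successive occurrences of an arc \<zeta> exhibits all occurrences
  but the last as first arcs of closed walks that are consecutive subwalks. A closed walk
  with support S traverses every arc of S, so at most |\<pi>|_S of these closed walks have
  support S. A finite graph has only finitely many supports, whence
  |\<pi>|_\<zeta> \<le> 1 + \<Sum>_S |\<pi>|_S, and |\<pi>_k|_\<zeta> is bounded as soon as every |\<pi>_k|_S is.\<close>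

lemma le_subgraph_count_iff:
  assumes "finite S" "S \<noteq> {}"
  shows "n \<le> subgraph_count p S \<longleftrightarrow> (\<forall>e\<in>S. n \<le> edge_count p e)"
  using assms by (simp add: subgraph_count_def)

lemma count_list_map_set_le_count_list_concat:
  assumes "e \<in> S"
  shows "count_list (map set gs) S \<le> count_list (concat gs) e"
proof (induction gs)
  case (Cons g gs)
  have "set g = S \<Longrightarrow> 0 < count_list g e"
    using assms count_list_0_iff[of g e] by auto
  with Cons show ?case by auto
qed simp

context wf_digraph
begin

definition closed_w_supports :: "'b set set" where
  "closed_w_supports = support_arcs ` Collect closed_w"

lemma awalk_decompose_closed_w:
  assumes "awalk u p v" "z \<in> set p"
  obtains a gs c where "p = a @ concat gs @ z # c" "count_list p z = Suc (length gs)"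
    "\<forall>g\<in>set gs. closed_w g"
proof -
  have "\<exists>a gs c. p = a @ concat gs @ z # c \<and> count_list p z = Suc (length gs)
          \<and> (\<forall>g\<in>set gs. closed_w g)"
    using assms
  proof (induction p arbitrary: v rule: rev_induct)
    case (snoc x xs)
    have walk_xs: "awalk u xs (awlast u xs)" and walk_x: "awalk (awlast u xs) [x] v"
      using snoc.prems(1) by simp_all
    show ?case
    proof (cases "z \<in> set xs")
      case False
      with snoc.prems(2) have "x = z" by simp
      with False show ?thesis
        by (intro exI[of _ xs] exI[of _ "[]"]) (simp add: count_list_0_iff)
    next
      case True
      from snoc.IH[OF walk_xs True] obtain a gs c where
        split: "xs = a @ concat gs @ z # c" and count: "count_list xs z = Suc (length gs)"
        and closed: "\<forall>g\<in>set gs. closed_w g"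
        by blast
      show ?thesis
      proof (cases "x = z")
        case True
        have "awalk (tail G z) (z # c) (awlast u xs)"
          using walk_xs split by (auto simp: awalk_Cons_iff)
        moreover have "awlast u xs = tail G z"
          using walk_x True by (simp add: awalk_Cons_iff)
        ultimately have "closed_w (z # c)"
          by (auto simp: closed_w_def)
        with True split count closed show ?thesis
          by (intro exI[of _ a] exI[of _ "gs @ [z # c]"] exI[of _ "[]"]) auto
      next
        case False
        with split count closed show ?thesis
          by (intro exI[of _ a] exI[of _ gs] exI[of _ "c @ [x]"]) auto
      qed
    qed
  qed simp
  with that show ?thesis by blast
qed

end

lemma (in fin_digraph) finite_closed_w_supports: "finite closed_w_supports"
  by (rule finite_subset[of _ "Pow (arcs G)"])
     (auto simp: closed_w_supports_def support_arcs_def closed_w_def awalk_def)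

lemma (in fin_digraph) edge_count_le_sum_subgraph_counts:
  assumes "awalk u p v"
  shows "edge_count p z \<le> Suc (\<Sum>S\<in>closed_w_supports. subgraph_count p S)"
proof (cases "z \<in> set p")
  case True
  then obtain a gs c where split: "p = a @ concat gs @ z # c"
    and count: "count_list p z = Suc (length gs)" and closed: "\<forall>g\<in>set gs. closed_w g"
    using awalk_decompose_closed_w[OF assms] by blast
  have supports: "set (map set gs) \<subseteq> closed_w_supports"
    using closed by (auto simp: closed_w_supports_def support_arcs_def)
  have "count_list (map set gs) S \<le> subgraph_count p S" if S: "S \<in> closed_w_supports" for S
  proof -
    obtain g where "closed_w g" "S = set g"
      using S by (auto simp: closed_w_supports_def support_arcs_def)
    then have "finite S" "S \<noteq> {}"
      by (auto simp: closed_w_def)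
    moreover have "count_list (map set gs) S \<le> edge_count p e" if "e \<in> S" for e
      using count_list_map_set_le_count_list_concat[OF that, of gs] split
      by (simp add: edge_count_def)
    ultimately show ?thesis
      by (simp add: le_subgraph_count_iff)
  qed
  then have "(\<Sum>S\<in>closed_w_supports. count_list (map set gs) S)
      \<le> (\<Sum>S\<in>closed_w_supports. subgraph_count p S)"
    by (rule sum_mono)
  then show ?thesis
    using count sum_count_set[OF supports finite_closed_w_supports]
    by (simp add: edge_count_def)
qed (simp add: edge_count_def count_list_0_iff)

theorem lemma3p7:
  fixes G :: "('a,'b) pre_digraph" and \<pi> :: "nat \<Rightarrow> 'b list"
  assumes "fin_digraph G"
    and "\<And>k. is_path G (\<pi> k)"
    and "\<zeta> \<in> arcs G"
    and "\<not> bdd_above (range (\<lambda>k. edge_count (\<pi> k) \<zeta>))"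
  shows "\<exists>\<gamma>. wf_digraph.closed_w G \<gamma> \<and>
           \<not> bdd_above (range (\<lambda>k. subgraph_count (\<pi> k) (support_arcs \<gamma>)))"
proof (rule ccontr)
  assume no_unbounded_cycle: "\<not> ?thesis"
  interpret fin_digraph G by fact
  have "\<forall>S\<in>closed_w_supports. \<exists>B. \<forall>k. subgraph_count (\<pi> k) S \<le> B"
    using no_unbounded_cycle by (auto simp: closed_w_supports_def bdd_above_def)
  then obtain B where B: "\<And>S k. S \<in> closed_w_supports \<Longrightarrow> subgraph_count (\<pi> k) S \<le> B S"
    by metis
  have "edge_count (\<pi> k) \<zeta> \<le> Suc (\<Sum>S\<in>closed_w_supports. B S)" for k
  proof -
    obtain u v where "awalk u (\<pi> k) v"
      using assms(2)[of k] by (auto simp: is_path_def)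
    then have "edge_count (\<pi> k) \<zeta> \<le> Suc (\<Sum>S\<in>closed_w_supports. subgraph_count (\<pi> k) S)"
      by (rule edge_count_le_sum_subgraph_counts)
    also have "\<dots> \<le> Suc (\<Sum>S\<in>closed_w_supports. B S)"
      using B by (simp add: sum_mono)
    finally show ?thesis .
  qed
  with assms(4) show False
    by (auto simp: bdd_above_def)
qed

end
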